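(* Let $G$ be a complete edge-colored graph. The following are equivalent: (i) $G$ is the graph representation of a symbolic ultrametric; (ii) $G$ does not contain a rainbow triangle and every monochromatic subgraph of $G$ is the simple permutation graph (for some labeling) of a separable permutation. Moreover, if $G$ is the graph representation of a symbolic ultrametric, then for every induced subgraph $H$ of $G$, every monochromatic subgraph of $H$ is the simple permutation graph of a separable permutation.
   Context: A complete edge-colored graph $G=(V,E_1,\dots,E_k)$ is a complete graph on finite $V$ with edges partitioned into nonempty color classes $E_i$; its monochromatic subgraphs are $G_{|i}=(V,E_i)$; induced subgraphs keep colors. A rainbow triangle is a set of three vertices whose three edges have pairwise distinct colors. A labeling is a bijection $\ell:V\to\{1,\dots,|V|\}$. A graph $(V,E)$ with labeling $\ell$ is a simple permutation graph of a permutation $\pi$ of $\{1,\dots,|V|\}$ if for all $u,v$ with $\ell(u)>\ell(v)$: $\{u,v\}\in E$ iff $\pi^{-1}(\ell(u))<\pi^{-1}(\ell(v))$. A permutation is separable if it contains neither of the patterns $2413$ and $3142$ (equivalently, it can be built from the one-element permutation by direct and skew sums). For a nonempty finite set $X$, a surjective map $\delta:X\times X\to\{1,\dots,k\}$ is a symbolic ultrametric if (U1) $\delta(x,y)=\delta(y,x)$; (U2) $|\{\delta(x,y),\delta(x,z),\delta(y,z)\}|\le2$ for all $x,y,z$; (U3) there is no 4-element subset $\{x,y,u,v\}$ with $\delta(x,y)=\delta(y,u)=\delta(u,v)\ne\delta(v,y)=\delta(x,v)=\delta(x,u)$. Its graph representation is the complete graph on $X$ with edge $\{x,y\}$ colored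 $\delta(x,y)$. *)

theory Defs
  imports "HOL-Combinatorics.Permutations"
begin

definition complete_edge_colored :: "'a set \<Rightarrow> ('a \<Rightarrow> 'a \<Rightarrow> nat) \<Rightarrow> nat \<Rightarrow> bool" where
  "complete_edge_colored V c k \<longleftrightarrow> finite V \<and>
     (\<forall>x\<in>V. \<forall>y\<in>V. x \<noteq> y \<longrightarrow> c x y = c y x \<and> c x y \<in> {1..k}) \<and>
     (\<forall>i\<in>{1..k}. \<exists>x\<in>V. \<exists>y\<in>V. x \<noteq> y \<and> c x y = i)"

definition mono_edge :: "('a \<Rightarrow> 'a \<Rightarrow> nat) \<Rightarrow> nat \<Rightarrow> 'a \<Rightarrow> 'a \<Rightarrow> bool" where
  "mono_edge c i x y \<longleftrightarrow> x \<noteq> y \<and> c x y = i"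

definition rainbow_triangle :: "'a set \<Rightarrow> ('a \<Rightarrow> 'a \<Rightarrow> nat) \<Rightarrow> 'a \<Rightarrow> 'a \<Rightarrow> 'a \<Rightarrow> bool" where
  "rainbow_triangle V c x y z \<longleftrightarrow> x \<in> V \<and> y \<in> V \<and> z \<in> V \<and> x \<noteq> y \<and> x \<noteq> z \<and> y \<noteq> z \<and>
     c x y \<noteq> c x z \<and> c x y \<noteq> c y z \<and> c x z \<noteq> c y z"

definition has_rainbow_triangle :: "'a set \<Rightarrow> ('a \<Rightarrow> 'a \<Rightarrow> nat) \<Rightarrow> bool" where
  "has_rainbow_triangle V c \<longleftrightarrow> (\<exists>x y z. rainbow_triangle V c x y z)"

definition contains_2413 :: "nat \<Rightarrow> (nat \<Rightarrow> nat) \<Rightarrow> bool" where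
  "contains_2413 n p \<longleftrightarrow> (\<exists>i1 i2 i3 i4. 1 \<le> i1 \<and> i1 < i2 \<and> i2 < i3 \<and> i3 < i4 \<and> i4 \<le> n \<and>
      p i3 < p i1 \<and> p i1 < p i4 \<and> p i4 < p i2)"

definition contains_3142 :: "nat \<Rightarrow> (nat \<Rightarrow> nat) \<Rightarrow> bool" where
  "contains_3142 n p \<longleftrightarrow> (\<exists>i1 i2 i3 i4. 1 \<le> i1 \<and> i1 < i2 \<and> i2 < i3 \<and> i3 < i4 \<and> i4 \<le> n \<and>
      p i2 < p i4 \<and> p i4 < p i1 \<and> p i1 < p i3)"

definition separable_perm :: "nat \<Rightarrow> (nat \<Rightarrow> nat) \<Rightarrow> bool" where
  "separable_perm n p \<longleftrightarrow> p permutes {1..n} \<and> \<not> contains_2413 n p \<and> \<not> contains_3142 n p"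

definition simple_perm_graph :: "'a set \<Rightarrow> ('a \<Rightarrow> 'a \<Rightarrow> bool) \<Rightarrow> ('a \<Rightarrow> nat) \<Rightarrow> (nat \<Rightarrow> nat) \<Rightarrow> bool" where
  "simple_perm_graph V E l p \<longleftrightarrow> bij_betw l V {1..card V} \<and> p permutes {1..card V} \<and>
     (\<forall>u\<in>V. \<forall>v\<in>V. l u > l v \<longrightarrow> (E u v \<longleftrightarrow> inv p (l u) < inv p (l v)))"

definition separable_perm_graph :: "'a set \<Rightarrow> ('a \<Rightarrow> 'a \<Rightarrow> bool) \<Rightarrow> bool" where
  "separable_perm_graph V E \<longleftrightarrow>
     (\<exists>l p. simple_perm_graph V E l p \<and> separable_perm (card V) p)"

definition symbolic_ultrametric :: "'a set \<Rightarrow> ('a \<Rightarrow> 'a \<Rightarrow> nat) \<Rightarrow> nat \<Rightarrow> bool" where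
  "symbolic_ultrametric X d m \<longleftrightarrow> finite X \<and> X \<noteq> {} \<and>
     (\<forall>x\<in>X. \<forall>y\<in>X. d x y \<in> {1..m}) \<and> (\<forall>i\<in>{1..m}. \<exists>x\<in>X. \<exists>y\<in>X. d x y = i) \<and>
     (\<forall>x\<in>X. \<forall>y\<in>X. d x y = d y x) \<and>
     (\<forall>x\<in>X. \<forall>y\<in>X. \<forall>z\<in>X. card {d x y, d x z, d y z} \<le> 2) \<and>
     \<not> (\<exists>x\<in>X. \<exists>y\<in>X. \<exists>u\<in>X. \<exists>v\<in>X. card {x, y, u, v} = 4 \<and>
          d x y = d y u \<and> d y u = d u v \<and> d u v \<noteq> d v y \<and> d v y = d x v \<and> d x v = d x u)"

definition is_su_graph_rep :: "'a set \<Rightarrow> ('a \<Rightarrow> 'a \<Rightarrow> nat) \<Rightarrow> bool" where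
  "is_su_graph_rep V c \<longleftrightarrow> (\<exists>d m. symbolic_ultrametric V d m \<and>
     (\<forall>x\<in>V. \<forall>y\<in>V. x \<noteq> y \<longrightarrow> d x y = c x y))"

definition colors_on :: "'a set \<Rightarrow> ('a \<Rightarrow> 'a \<Rightarrow> nat) \<Rightarrow> nat set" where
  "colors_on W c = {c x y | x y. x \<in> W \<and> y \<in> W \<and> x \<noteq> y}"

end

theory Submission
  imports Defs
begin

(* Axiom (U2) says that there is no rainbow triangle, and, given (U2), axiom (U3) says that no
   colour class contains an induced path on four vertices.  So the theorem reduces to the classical
   fact that the P4-free graphs (cographs) are exactly the permutation graphs of separable
   permutations, and P4-freeness passes to induced subgraphs.
   The four points of an induced P4 in a permutation graph form the pattern 2413 or 3142.
   Conversely, by Seinsche's theorem a cograph on at least two vertices or its complement is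
   disconnected.  A disjoint union of graphs is represented by the direct sum of the permutations,
   and complementing a graph reverses its permutation, which keeps it separable. *)

section \<open>Cographs\<close>

definition p4_free :: "'a set \<Rightarrow> ('a \<Rightarrow> 'a \<Rightarrow> bool) \<Rightarrow> bool" where
  "p4_free V E \<longleftrightarrow> \<not> (\<exists>a\<in>V. \<exists>b\<in>V. \<exists>c\<in>V. \<exists>d\<in>V. distinct [a, b, c, d] \<and>
     E a b \<and> E b c \<and> E c d \<and> \<not> E a c \<and> \<not> E b d \<and> \<not> E a d)"

lemma p4_freeD:
  assumes "p4_free V E" "a \<in> V" "b \<in> V" "c \<in> V" "d \<in> V" "distinct [a, b, c, d]"
    "E a b" "E b c" "E c d" "\<not> E a c" "\<not> E b d"
  shows "E a d"
  using assms unfolding p4_free_def by blast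

lemma p4_free_subset: "p4_free V E \<Longrightarrow> W \<subseteq> V \<Longrightarrow> p4_free W E"
  unfolding p4_free_def by blast

lemma symp_on_complement: "symp_on V E \<Longrightarrow> symp_on V (\<lambda>x y. \<not> E x y)"
  unfolding symp_on_def by blast

text \<open>An induced path a-b-c-d of the complement is the induced path c-a-d-b of the graph itself.\<close>
lemma p4_free_complement:
  assumes "symp_on V E" "p4_free V E"
  shows "p4_free V (\<lambda>x y. \<not> E x y)"
  unfolding p4_free_def
proof clarify
  fix a b c d
  assume abcd: "a \<in> V" "b \<in> V" "c \<in> V" "d \<in> V" "distinct [a, b, c, d]"
    and edges: "\<not> E a b" "\<not> E b c" "\<not> E c d" "E a c" "E b d" "E a d"
  then have "E c a" "E d b" "\<not> E c b" using \<open>symp_on V E\<close> by (auto dest: symp_onD)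
  moreover have "distinct [c, a, d, b]" using abcd(5) by auto
  ultimately show False
    using p4_freeD[OF \<open>p4_free V E\<close>, of c a d b] abcd(1-4) edges by blast
qed

definition disconnected :: "'a set \<Rightarrow> ('a \<Rightarrow> 'a \<Rightarrow> bool) \<Rightarrow> bool" where
  "disconnected V E \<longleftrightarrow> (\<exists>A. A \<subseteq> V \<and> A \<noteq> {} \<and> A \<noteq> V \<and> (\<forall>a\<in>A. \<forall>b\<in>V - A. \<not> E a b))"

definition component :: "'a set \<Rightarrow> ('a \<Rightarrow> 'a \<Rightarrow> bool) \<Rightarrow> 'a \<Rightarrow> 'a set" where
  "component V E w = {x. (\<lambda>x y. x \<in> V \<and> y \<in> V \<and> E x y)\<^sup>*\<^sup>* w x}"

lemma component_self: "w \<in> component V E w"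
  by (simp add: component_def)

lemma component_subset: "w \<in> V \<Longrightarrow> component V E w \<subseteq> V"
  unfolding component_def by (auto elim: rtranclp.cases)

lemma component_closed:
  assumes "x \<in> component V E w" "w \<in> V" "y \<in> V" "E x y"
  shows "y \<in> component V E w"
proof -
  let ?R = "\<lambda>x y. x \<in> V \<and> y \<in> V \<and> E x y"
  have "x \<in> V" using component_subset[OF assms(2)] assms(1) by blast
  have "?R\<^sup>*\<^sup>* w x" using assms(1) unfolding component_def by simp
  moreover have "?R x y" using \<open>x \<in> V\<close> assms(3,4) by simp
  ultimately have "?R\<^sup>*\<^sup>* w y" by (rule rtranclp.rtrancl_into_rtrancl)
  then show ?thesis unfolding component_def by simp
qed

lemma component_subset_closed:
  assumes "w \<in> S" and closed: "\<And>x y. x \<in> S \<Longrightarrow> y \<in> V \<Longrightarrow> E x y \<Longrightarrow> y \<in> S"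
  shows "component V E w \<subseteq> S"
proof
  fix x assume "x \<in> component V E w"
  then have "(\<lambda>x y. x \<in> V \<and> y \<in> V \<and> E x y)\<^sup>*\<^sup>* w x" unfolding component_def by simp
  then show "x \<in> S" by (induction rule: rtranclp_induct) (use \<open>w \<in> S\<close> closed in auto)
qed

lemma component_ne_if_disconnected:
  assumes "symp_on V E" "disconnected V E" "w \<in> V"
  shows "component V E w \<noteq> V"
proof -
  obtain A where A: "A \<subseteq> V" "A \<noteq> {}" "A \<noteq> V" "\<forall>a\<in>A. \<forall>b\<in>V - A. \<not> E a b"
    using \<open>disconnected V E\<close> unfolding disconnected_def by blast
  have "\<not> E x y" if "x \<in> V - A" "y \<in> A" for x y
    using A(4) that \<open>symp_on V E\<close> A(1) by (auto dest: symp_onD)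
  then have "component V E w \<subseteq> (if w \<in> A then A else V - A)"
    using A(4) \<open>w \<in> V\<close> by (intro component_subset_closed) (auto split: if_splits)
  then show ?thesis using A(1-3) by (auto split: if_splits)
qed

lemma component_crossing_edge:
  assumes "x \<in> component V E w" "P w" "\<not> P x"
  shows "\<exists>s\<in>component V E w. \<exists>t\<in>component V E w. E s t \<and> P s \<and> \<not> P t"
proof -
  let ?R = "\<lambda>x y. x \<in> V \<and> y \<in> V \<and> E x y"
  have "?R\<^sup>*\<^sup>* w x" using assms(1) unfolding component_def by simp
  then have "P x \<or> (\<exists>s t. ?R\<^sup>*\<^sup>* w s \<and> ?R s t \<and> P s \<and> \<not> P t)"
    by (induction rule: rtranclp_induct) (use \<open>P w\<close> in auto)
  then obtain s t where s: "?R\<^sup>*\<^sup>* w s" and st: "?R s t" "P s" "\<not> P t"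
    using \<open>\<not> P x\<close> by blast
  moreover have "?R\<^sup>*\<^sup>* w t" using s st(1) by (rule rtranclp.rtrancl_into_rtrancl)
  ultimately show ?thesis unfolding component_def by auto
qed

lemma not_disconnected_neighbour:
  assumes "symp_on V E" "\<not> disconnected V E" "v \<in> V" "S \<subseteq> V - {v}" "S \<noteq> {}"
    and isolated: "\<And>x y. x \<in> S \<Longrightarrow> y \<in> V - {v} - S \<Longrightarrow> \<not> E x y"
  shows "\<exists>a\<in>S. E v a"
proof -
  have "S \<subseteq> V" "S \<noteq> V" using assms(3,4) by auto
  then obtain a b where "a \<in> S" "b \<in> V - S" "E a b"
    using assms(2,5) unfolding disconnected_def by blast
  moreover have "b = v" using isolated calculation by blast
  ultimately show ?thesis using assms(1,3) \<open>S \<subseteq> V\<close> by (blast dest: symp_onD)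
qed

text \<open>If G - v is disconnected while neither G nor its complement is, v has a
  non-neighbour w. The component C of w in G - v contains a neighbour of v, and so does
  the rest of G - v, say b. Walking in C from w to a neighbour of v crosses an edge st
  with s not adjacent and t adjacent to v, and s-t-v-b is an induced P4.\<close>
lemma p4_free_disconnected_vertex_deleted:
  assumes sym: "symp_on V E" and p4: "p4_free V E" and "v \<in> V"
    and "disconnected (V - {v}) E"
  shows "disconnected V E \<or> disconnected V (\<lambda>x y. \<not> E x y)"
proof (rule ccontr)
  define U where "U = V - {v}"
  assume "\<not> ?thesis"
  then have conn: "\<not> disconnected V E" "\<not> disconnected V (\<lambda>x y. \<not> E x y)" by auto
  have "U \<noteq> {}" using \<open>disconnected (V - {v}) E\<close> unfolding U_def disconnected_def by blast
  then obtain w where w: "w \<in> U" "\<not> E v w"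
    using not_disconnected_neighbour[OF symp_on_complement[OF sym] conn(2) \<open>v \<in> V\<close>, of U]
    unfolding U_def by blast
  define C where "C = component U E w"
  have C_U: "C \<subseteq> U" and C_closed: "\<And>x y. x \<in> C \<Longrightarrow> y \<in> U \<Longrightarrow> E x y \<Longrightarrow> y \<in> C"
    using component_subset[OF w(1)] component_closed[OF _ w(1)] unfolding C_def by auto
  have "C \<noteq> {}" "C \<noteq> U" "U \<subseteq> V"
    using component_self[of w U E] component_ne_if_disconnected[OF symp_on_subset[OF sym]]
      \<open>disconnected (V - {v}) E\<close> w(1) unfolding C_def U_def by auto
  have E_sym: "E y x" if "E x y" "x \<in> V" "y \<in> V" for x y
    using sym that by (blast dest: symp_onD)
  obtain a where "a \<in> C" "E v a"
    using not_disconnected_neighbour[OF sym conn(1) \<open>v \<in> V\<close> _ \<open>C \<noteq> {}\<close>] C_U C_closed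
    unfolding U_def by blast
  moreover obtain b where b: "b \<in> U - C" "E v b"
  proof -
    have "\<not> E x y" if "x \<in> U - C" "y \<in> C" for x y
      using that C_closed E_sym C_U \<open>U \<subseteq> V\<close> by blast
    then show thesis
      using that not_disconnected_neighbour[OF sym conn(1) \<open>v \<in> V\<close>, of "U - C"] C_U \<open>C \<noteq> U\<close>
      unfolding U_def by blast
  qed
  ultimately obtain s t where st: "s \<in> C" "t \<in> C" "E s t" "\<not> E v s" "E v t"
    using component_crossing_edge[of a U E w "\<lambda>x. \<not> E v x"] w(2) unfolding C_def by blast
  have "s \<in> V" "t \<in> V" "b \<in> V" "v \<notin> U" using st(1,2) b(1) C_U \<open>U \<subseteq> V\<close> unfolding U_def by auto
  moreover have "\<not> E s b" "\<not> E t b" using C_closed st(1,2) b(1) by blast+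
  moreover have "distinct [s, t, v, b]" using st b C_U \<open>v \<notin> U\<close> by auto
  moreover have "E t v" "\<not> E s v" using E_sym st \<open>s \<in> V\<close> \<open>t \<in> V\<close> \<open>v \<in> V\<close> by blast+
  ultimately show False using p4_freeD[OF p4, of s t v b] st(3) b(2) \<open>v \<in> V\<close> by blast
qed

lemma p4_free_disconnected_or_co_disconnected:
  assumes "finite V" "2 \<le> card V" "symp_on V E" "p4_free V E"
  shows "disconnected V E \<or> disconnected V (\<lambda>x y. \<not> E x y)"
  using assms
proof (induction "card V" arbitrary: V rule: less_induct)
  case less
  show ?case
  proof (cases "card V = 2")
    case True
    then obtain x y where "V = {x, y}" "x \<noteq> y" by (meson card_2_iff)
    then have "{x} \<subseteq> V \<and> {x} \<noteq> {} \<and> {x} \<noteq> V \<and>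
      ((\<forall>a\<in>{x}. \<forall>b\<in>V - {x}. \<not> E a b) \<or> (\<forall>a\<in>{x}. \<forall>b\<in>V - {x}. \<not> \<not> E a b))"
      by auto
    then show ?thesis unfolding disconnected_def by blast
  next
    case False
    obtain v where "v \<in> V" using less.prems(2) by fastforce
    have "card (V - {v}) < card V" "2 \<le> card (V - {v})"
      using \<open>v \<in> V\<close> less.prems(1,2) False by (auto simp: card_Diff_singleton)
    moreover have "symp_on (V - {v}) E" "p4_free (V - {v}) E"
      using symp_on_subset[OF less.prems(3)] p4_free_subset[OF less.prems(4)] by auto
    ultimately have "disconnected (V - {v}) E \<or> disconnected (V - {v}) (\<lambda>x y. \<not> E x y)"
      using less.hyps less.prems(1) by blast
    then show ?thesis
    proof
      assume "disconnected (V - {v}) E"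
      then show ?thesis by (rule p4_free_disconnected_vertex_deleted[OF less.prems(3,4) \<open>v \<in> V\<close>])
    next
      assume "disconnected (V - {v}) (\<lambda>x y. \<not> E x y)"
      from p4_free_disconnected_vertex_deleted[OF symp_on_complement[OF less.prems(3)]
          p4_free_complement[OF less.prems(3,4)] \<open>v \<in> V\<close> this]
      show ?thesis by auto
    qed
  qed
qed

section \<open>Permutation graphs of separable permutations\<close>

text \<open>Vertex u is the point (pos u, l u): the entry l u stands at position pos u of the permutation
  in one-line notation (pos u = inv p (l u) for the p of simple_perm_graph), and the edges are
  the inversions.\<close>
definition perm_graph_rep :: "'a set \<Rightarrow> ('a \<Rightarrow> 'a \<Rightarrow> bool) \<Rightarrow> ('a \<Rightarrow> nat) \<Rightarrow> ('a \<Rightarrow> nat) \<Rightarrow> bool" where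
  "perm_graph_rep V E l pos \<longleftrightarrow> bij_betw l V {1..card V} \<and> bij_betw pos V {1..card V} \<and>
     (\<forall>u\<in>V. \<forall>v\<in>V. l v < l u \<longrightarrow> (E u v \<longleftrightarrow> pos u < pos v))"

definition is_2413_or_3142 :: "('a \<Rightarrow> nat) \<Rightarrow> ('a \<Rightarrow> nat) \<Rightarrow> 'a \<Rightarrow> 'a \<Rightarrow> 'a \<Rightarrow> 'a \<Rightarrow> bool" where
  "is_2413_or_3142 l pos y1 y2 y3 y4 \<longleftrightarrow> pos y1 < pos y2 \<and> pos y2 < pos y3 \<and> pos y3 < pos y4 \<and>
     (l y3 < l y1 \<and> l y1 < l y4 \<and> l y4 < l y2 \<or> l y2 < l y4 \<and> l y4 < l y1 \<and> l y1 < l y3)"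

definition has_2413_or_3142 :: "'a set \<Rightarrow> ('a \<Rightarrow> nat) \<Rightarrow> ('a \<Rightarrow> nat) \<Rightarrow> bool" where
  "has_2413_or_3142 V l pos \<longleftrightarrow> (\<exists>y1\<in>V. \<exists>y2\<in>V. \<exists>y3\<in>V. \<exists>y4\<in>V. is_2413_or_3142 l pos y1 y2 y3 y4)"

lemma has_2413_or_3142_order_iso:
  assumes "bij_betw h V W"
    and "\<And>x y. x \<in> V \<Longrightarrow> y \<in> V \<Longrightarrow> l x < l y \<longleftrightarrow> l' (h x) < l' (h y)"
    and "\<And>x y. x \<in> V \<Longrightarrow> y \<in> V \<Longrightarrow> pos x < pos y \<longleftrightarrow> pos' (h x) < pos' (h y)"
  shows "has_2413_or_3142 V l pos \<longleftrightarrow> has_2413_or_3142 W l' pos'"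
proof -
  have "is_2413_or_3142 l pos y1 y2 y3 y4 \<longleftrightarrow> is_2413_or_3142 l' pos' (h y1) (h y2) (h y3) (h y4)"
    if "y1 \<in> V" "y2 \<in> V" "y3 \<in> V" "y4 \<in> V" for y1 y2 y3 y4
    using that unfolding is_2413_or_3142_def by (simp add: assms(2,3))
  moreover have "W = h ` V" using assms(1) by (simp add: bij_betw_def)
  ultimately show ?thesis unfolding has_2413_or_3142_def by auto
qed

lemma has_2413_or_3142_reverse:
  assumes "\<And>x. x \<in> V \<Longrightarrow> pos x \<le> n"
  shows "has_2413_or_3142 V l (\<lambda>x. Suc n - pos x) \<longleftrightarrow> has_2413_or_3142 V l pos"
proof -
  have rev: "Suc n - pos x < Suc n - pos y \<longleftrightarrow> pos y < pos x" if "x \<in> V" "y \<in> V" for x y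
    using assms[OF that(1)] assms[OF that(2)] by arith
  have "is_2413_or_3142 l (\<lambda>x. Suc n - pos x) y1 y2 y3 y4 \<longleftrightarrow> is_2413_or_3142 l pos y4 y3 y2 y1"
    if "y1 \<in> V" "y2 \<in> V" "y3 \<in> V" "y4 \<in> V" for y1 y2 y3 y4
    using that unfolding is_2413_or_3142_def by (auto simp: rev)
  then show ?thesis unfolding has_2413_or_3142_def by blast
qed

lemma has_2413_or_3142_iff_contains:
  "has_2413_or_3142 {1..n} p id \<longleftrightarrow> contains_2413 n p \<or> contains_3142 n p"
proof
  assume "has_2413_or_3142 {1..n} p id"
  then obtain y1 y2 y3 y4 where "1 \<le> y1" "y4 \<le> n" "is_2413_or_3142 p id y1 y2 y3 y4"
    unfolding has_2413_or_3142_def by auto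
  then show "contains_2413 n p \<or> contains_3142 n p"
    unfolding is_2413_or_3142_def contains_2413_def contains_3142_def id_def by blast
next
  assume "contains_2413 n p \<or> contains_3142 n p"
  then obtain y1 y2 y3 y4 where "1 \<le> y1" "y4 \<le> n" and pattern: "is_2413_or_3142 p id y1 y2 y3 y4"
    unfolding is_2413_or_3142_def contains_2413_def contains_3142_def id_def by blast
  moreover have "y1 < y2" "y2 < y3" "y3 < y4" using pattern unfolding is_2413_or_3142_def by auto
  ultimately have "y1 \<in> {1..n}" "y2 \<in> {1..n}" "y3 \<in> {1..n}" "y4 \<in> {1..n}" by auto
  then show "has_2413_or_3142 {1..n} p id" using pattern unfolding has_2413_or_3142_def by blast
qed

lemma separable_perm_graph_obtain_rep:
  assumes "separable_perm_graph V E"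
  obtains l pos where "perm_graph_rep V E l pos" "\<not> has_2413_or_3142 V l pos"
proof -
  obtain l p where spg: "simple_perm_graph V E l p" and sep: "separable_perm (card V) p"
    using assms unfolding separable_perm_graph_def by blast
  define n where "n = card V"
  define pos where "pos = inv p \<circ> l"
  have p: "p permutes {1..n}" and l: "bij_betw l V {1..n}"
    using spg unfolding simple_perm_graph_def n_def by auto
  have pos: "bij_betw pos V {1..n}"
    unfolding pos_def using l permutes_imp_bij[OF permutes_inv[OF p]] by (rule bij_betw_trans)
  have p_pos: "p (pos x) = l x" for x
    unfolding pos_def using permutes_inverses(1)[OF p] by simp
  have "perm_graph_rep V E l pos"
    using spg pos unfolding perm_graph_rep_def simple_perm_graph_def pos_def n_def by auto
  moreover have "has_2413_or_3142 V l pos \<longleftrightarrow> has_2413_or_3142 {1..n} p id"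
    by (rule has_2413_or_3142_order_iso[OF pos]) (simp_all add: p_pos)
  ultimately show thesis
    using that sep has_2413_or_3142_iff_contains unfolding separable_perm_def n_def by auto
qed

lemma separable_perm_graph_if_rep:
  assumes rep: "perm_graph_rep V E l pos" and no_pattern: "\<not> has_2413_or_3142 V l pos"
  shows "separable_perm_graph V E"
proof -
  define n where "n = card V"
  have l: "bij_betw l V {1..n}" and pos: "bij_betw pos V {1..n}"
    using rep unfolding perm_graph_rep_def n_def by auto
  define p where "p i = (if i \<in> {1..n} then l (inv_into V pos i) else i)" for i
  have p_pos: "p (pos x) = l x" if "x \<in> V" for x
    using bij_betwE[OF pos] inv_into_f_f[OF bij_betw_imp_inj_on[OF pos] that] that
    by (simp add: p_def)
  have "bij_betw p {1..n} {1..n}"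
    using bij_betw_trans[OF bij_betw_inv_into[OF pos] l]
    by (rule bij_betw_cong[THEN iffD1, rotated]) (simp add: p_def)
  then have p: "p permutes {1..n}" by (rule bij_imp_permutes) (auto simp: p_def)
  have "inv p (l x) = pos x" if "x \<in> V" for x
    using permutes_inv_eq[OF p] p_pos[OF that] by simp
  then have "simple_perm_graph V E l p"
    using rep p unfolding simple_perm_graph_def perm_graph_rep_def n_def by auto
  moreover have "has_2413_or_3142 V l pos \<longleftrightarrow> has_2413_or_3142 {1..n} p id"
    by (rule has_2413_or_3142_order_iso[OF pos]) (simp_all add: p_pos)
  ultimately show ?thesis
    using p no_pattern has_2413_or_3142_iff_contains
    unfolding separable_perm_graph_def separable_perm_def n_def by auto
qed

lemma inversion_path_2413_or_3142:
  fixes l pos :: "'a \<Rightarrow> nat"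
  assumes dl: "distinct [l a, l b, l c, l d]" and dp: "distinct [pos a, pos b, pos c, pos d]"
    and ab: "l a < l b \<longleftrightarrow> pos b < pos a" and bc: "l b < l c \<longleftrightarrow> pos c < pos b"
    and cd: "l c < l d \<longleftrightarrow> pos d < pos c" and ac: "\<not> (l a < l c \<longleftrightarrow> pos c < pos a)"
    and bd: "\<not> (l b < l d \<longleftrightarrow> pos d < pos b)" and ad: "\<not> (l a < l d \<longleftrightarrow> pos d < pos a)"
    and "pos a < pos d"
  shows "is_2413_or_3142 l pos a c b d \<or> is_2413_or_3142 l pos b a d c"
proof -
  have "l a < l d" using ad \<open>pos a < pos d\<close> by auto
  txt \<open>b lies left of a or between a and d, c lies right of d or between a and d; the two
    mixed cases contradict the edge bc.\<close>
  have b: "pos b < pos a \<and> l a < l b \<and> l b < l d \<or> pos a < pos b \<and> pos b < pos d \<and> l b < l a"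
  proof (cases "pos b < pos a")
    case True
    then show ?thesis using ab bd dl \<open>pos a < pos d\<close> by auto
  next
    case False
    then show ?thesis using ab bd dl dp \<open>pos a < pos d\<close> \<open>l a < l d\<close> by auto
  qed
  have c: "pos a < pos c \<and> pos c < pos d \<and> l d < l c \<or> pos d < pos c \<and> l a < l c \<and> l c < l d"
  proof (cases "pos c < pos d")
    case True
    then show ?thesis using ac cd dl dp \<open>pos a < pos d\<close> \<open>l a < l d\<close> by auto
  next
    case False
    then show ?thesis using ac cd dl dp \<open>pos a < pos d\<close> by auto
  qed
  from b c show ?thesis
  proof (elim disjE conjE)
    assume "pos b < pos a" "l a < l b" "l b < l d" "pos d < pos c" "l a < l c" "l c < l d"
    moreover have "l c < l b" using bc dl \<open>pos b < pos a\<close> \<open>pos a < pos d\<close> \<open>pos d < pos c\<close> by auto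
    ultimately show ?thesis using \<open>pos a < pos d\<close> unfolding is_2413_or_3142_def by simp
  next
    assume "pos a < pos b" "pos b < pos d" "l b < l a" "pos a < pos c" "pos c < pos d" "l d < l c"
    moreover have "pos c < pos b" using bc dp \<open>l b < l a\<close> \<open>l a < l d\<close> \<open>l d < l c\<close> by auto
    ultimately show ?thesis using \<open>l a < l d\<close> unfolding is_2413_or_3142_def by simp
  qed (use bc in linarith)+
qed

lemma perm_graph_rep_inj_on:
  assumes "perm_graph_rep V E l pos"
  shows "inj_on l V" "inj_on pos V"
  using assms unfolding perm_graph_rep_def bij_betw_def by blast+

lemma perm_graph_rep_edge_iff:
  assumes rep: "perm_graph_rep V E l pos" and "symp_on V E" "u \<in> V" "v \<in> V" "u \<noteq> v"
  shows "E u v \<longleftrightarrow> (l u < l v \<longleftrightarrow> pos v < pos u)"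
proof -
  have edge: "\<forall>u\<in>V. \<forall>v\<in>V. l v < l u \<longrightarrow> (E u v \<longleftrightarrow> pos u < pos v)"
    using rep unfolding perm_graph_rep_def by blast
  have "l u \<noteq> l v" "pos u \<noteq> pos v"
    using perm_graph_rep_inj_on[OF rep] assms(3-5) by (meson inj_on_contraD)+
  moreover have "E u v \<longleftrightarrow> E v u" using \<open>symp_on V E\<close> assms(3,4) by (blast dest: symp_onD)
  ultimately show ?thesis
    using edge assms(3,4) by (cases "l v < l u") auto
qed

lemma perm_graph_rep_P4_has_2413_or_3142:
  assumes rep: "perm_graph_rep V E l pos" and "symp_on V E"
    and V: "a \<in> V" "b \<in> V" "c \<in> V" "d \<in> V" and "distinct [a, b, c, d]"
    and edges: "E a b" "E b c" "E c d" "\<not> E a c" "\<not> E b d" "\<not> E a d"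
    and "pos a < pos d"
  shows "has_2413_or_3142 V l pos"
proof -
  have "{a, b, c, d} \<subseteq> V" using V by simp
  then have "inj_on l {a, b, c, d}" "inj_on pos {a, b, c, d}"
    using perm_graph_rep_inj_on[OF rep] by (meson inj_on_subset)+
  then have "distinct (map l [a, b, c, d])" "distinct (map pos [a, b, c, d])"
    using \<open>distinct [a, b, c, d]\<close> distinct_map by auto
  then have "distinct [l a, l b, l c, l d]" "distinct [pos a, pos b, pos c, pos d]" by simp_all
  moreover have "l a < l b \<longleftrightarrow> pos b < pos a" "l b < l c \<longleftrightarrow> pos c < pos b"
    "l c < l d \<longleftrightarrow> pos d < pos c" "\<not> (l a < l c \<longleftrightarrow> pos c < pos a)"
    "\<not> (l b < l d \<longleftrightarrow> pos d < pos b)" "\<not> (l a < l d \<longleftrightarrow> pos d < pos a)"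
    using perm_graph_rep_edge_iff[OF rep \<open>symp_on V E\<close>] V edges \<open>distinct [a, b, c, d]\<close> by simp_all
  ultimately have "is_2413_or_3142 l pos a c b d \<or> is_2413_or_3142 l pos b a d c"
    using \<open>pos a < pos d\<close> by (rule inversion_path_2413_or_3142)
  then show ?thesis using V unfolding has_2413_or_3142_def by blast
qed

lemma separable_perm_graph_imp_p4_free:
  assumes "symp_on V E" "separable_perm_graph V E"
  shows "p4_free V E"
  unfolding p4_free_def
proof clarify
  fix a b c d
  assume V: "a \<in> V" "b \<in> V" "c \<in> V" "d \<in> V" and "distinct [a, b, c, d]"
    and edges: "E a b" "E b c" "E c d" "\<not> E a c" "\<not> E b d" "\<not> E a d"
  obtain l pos where rep: "perm_graph_rep V E l pos" and no_pattern: "\<not> has_2413_or_3142 V l pos"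
    using \<open>separable_perm_graph V E\<close> by (rule separable_perm_graph_obtain_rep)
  have "pos a \<noteq> pos d"
    using perm_graph_rep_inj_on(2)[OF rep] V \<open>distinct [a, b, c, d]\<close> by (auto dest: inj_onD)
  then consider "pos a < pos d" | "pos d < pos a" by linarith
  then show False
  proof cases
    case 1
    then show False
      using perm_graph_rep_P4_has_2413_or_3142[OF rep \<open>symp_on V E\<close> V \<open>distinct [a, b, c, d]\<close> edges]
        no_pattern by blast
  next
    case 2
    have "distinct [d, c, b, a]" using \<open>distinct [a, b, c, d]\<close> by auto
    moreover have "E d c" "E c b" "E b a" "\<not> E d b" "\<not> E c a" "\<not> E d a"
      using edges V \<open>symp_on V E\<close> by (blast dest: symp_onD)+
    ultimately show False
      using perm_graph_rep_P4_has_2413_or_3142[OF rep \<open>symp_on V E\<close> V(4,3,2,1)] 2 no_pattern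
      by blast
  qed
qed

lemma has_2413_or_3142_Un:
  assumes "\<not> has_2413_or_3142 A l pos" "\<not> has_2413_or_3142 B l pos"
    and below: "\<And>x y. x \<in> A \<Longrightarrow> y \<in> B \<Longrightarrow> l x < l y \<and> pos x < pos y"
  shows "\<not> has_2413_or_3142 (A \<union> B) l pos"
proof
  assume "has_2413_or_3142 (A \<union> B) l pos"
  then obtain y1 y2 y3 y4 where ys: "y1 \<in> A \<union> B" "y2 \<in> A \<union> B" "y3 \<in> A \<union> B" "y4 \<in> A \<union> B"
    and pattern: "is_2413_or_3142 l pos y1 y2 y3 y4"
    unfolding has_2413_or_3142_def by blast
  have down: "x \<in> A" if "x \<in> A \<union> B" "y \<in> A" "pos x < pos y \<or> l x < l y" for x y
    using below[of y x] that by auto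
  have up: "x \<in> B" if "x \<in> A \<union> B" "y \<in> B" "pos y < pos x \<or> l y < l x" for x y
    using below[of x y] that by auto
  have "(y1 \<in> A \<and> y2 \<in> A \<and> y3 \<in> A \<and> y4 \<in> A) \<or> (y1 \<in> B \<and> y2 \<in> B \<and> y3 \<in> B \<and> y4 \<in> B)"
  proof (cases "y4 \<in> A")
    case True
    then show ?thesis
      using down ys pattern unfolding is_2413_or_3142_def by (meson order.strict_trans)
  next
    case False
    then have "y4 \<in> B" using ys by blast
    show ?thesis
    proof (cases "y1 \<in> B")
      case True
      then show ?thesis
        using up ys pattern unfolding is_2413_or_3142_def by (meson order.strict_trans)
    next
      case False
      then have "y1 \<in> A" using ys by blast
      then have "l y1 < l y4" using below \<open>y4 \<in> B\<close> by blast
      then have "l y3 < l y1" "l y4 < l y2" using pattern unfolding is_2413_or_3142_def by auto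
      then have "y2 \<in> B" "y3 \<in> A" using up down ys \<open>y4 \<in> B\<close> \<open>y1 \<in> A\<close> by blast+
      then show ?thesis using up ys pattern unfolding is_2413_or_3142_def by blast
    qed
  qed
  then show False using assms(1,2) ys pattern unfolding has_2413_or_3142_def by blast
qed

lemma bij_betw_Un_shift:
  assumes "bij_betw f A {1..m}" "bij_betw g B {1..(n::nat)}" "A \<inter> B = {}"
  shows "bij_betw (\<lambda>x. if x \<in> A then f x else m + g x) (A \<union> B) {1..m + n}"
proof -
  have "bij_betw ((+) m) {1..n} {m + 1..m + n}" by (simp add: add.commute)
  from bij_betw_trans[OF assms(2) this] have "bij_betw (\<lambda>x. m + g x) B {m + 1..m + n}"
    by (simp add: comp_def)
  then have "bij_betw (\<lambda>x. if x \<in> A then f x else m + g x) (A \<union> B) ({1..m} \<union> {m + 1..m + n})"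
    by (rule bij_betw_disjoint_Un[OF assms(1) _ assms(3)]) auto
  moreover have "{1..m} \<union> {m + 1..m + n} = {1..m + n}" by auto
  ultimately show ?thesis by simp
qed

lemma perm_graph_rep_Un:
  assumes "finite A" "finite B" "A \<inter> B = {}"
    and A: "perm_graph_rep A E lA pA" and B: "perm_graph_rep B E lB pB"
    and no_edge: "\<And>a b. a \<in> A \<Longrightarrow> b \<in> B \<Longrightarrow> \<not> E b a"
  shows "perm_graph_rep (A \<union> B) E (\<lambda>x. if x \<in> A then lA x else card A + lB x)
    (\<lambda>x. if x \<in> A then pA x else card A + pB x)"
proof -
  have bij: "bij_betw lA A {1..card A}" "bij_betw pA A {1..card A}"
    "bij_betw lB B {1..card B}" "bij_betw pB B {1..card B}"
    using A B unfolding perm_graph_rep_def by auto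
  have range: "lA x \<le> card A" "pA x \<le> card A" if "x \<in> A" for x
    using bij(1,2) that by (auto dest: bij_betwE)
  have notA: "x \<notin> A" if "x \<in> B" for x using assms(3) that by blast
  show ?thesis
    unfolding perm_graph_rep_def card_Un_disjoint[OF assms(1-3)]
  proof (intro conjI ballI impI)
    fix u v assume uv: "u \<in> A \<union> B" "v \<in> A \<union> B"
      "(if v \<in> A then lA v else card A + lB v) < (if u \<in> A then lA u else card A + lB u)"
    consider "u \<in> A" "v \<in> A" | "u \<in> B" "v \<in> B" | "u \<in> B" "v \<in> A" | "u \<in> A" "v \<in> B"
      using uv by blast
    then show "E u v \<longleftrightarrow>
      (if u \<in> A then pA u else card A + pB u) < (if v \<in> A then pA v else card A + pB v)"
    proof cases
      case 1
      then show ?thesis using A uv(3) unfolding perm_graph_rep_def by auto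
    next
      case 2
      then show ?thesis using B uv(3) notA unfolding perm_graph_rep_def by auto
    next
      case 3
      then show ?thesis using no_edge range notA by fastforce
    next
      case 4
      then show ?thesis using uv(3) range notA by fastforce
    qed
  qed (use bij_betw_Un_shift[OF bij(1,3) assms(3)] bij_betw_Un_shift[OF bij(2,4) assms(3)] in auto)
qed

lemma separable_perm_graph_Un:
  assumes "finite A" "finite B" "A \<inter> B = {}"
    and "separable_perm_graph A E" "separable_perm_graph B E"
    and no_edge: "\<And>a b. a \<in> A \<Longrightarrow> b \<in> B \<Longrightarrow> \<not> E b a"
  shows "separable_perm_graph (A \<union> B) E"
proof -
  obtain lA pA where A: "perm_graph_rep A E lA pA" "\<not> has_2413_or_3142 A lA pA"
    using assms(4) by (rule separable_perm_graph_obtain_rep)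
  obtain lB pB where B: "perm_graph_rep B E lB pB" "\<not> has_2413_or_3142 B lB pB"
    using assms(5) by (rule separable_perm_graph_obtain_rep)
  define l where "l x = (if x \<in> A then lA x else card A + lB x)" for x
  define pos where "pos x = (if x \<in> A then pA x else card A + pB x)" for x
  have "perm_graph_rep (A \<union> B) E l pos"
    unfolding l_def[abs_def] pos_def[abs_def] using assms(1-3) A(1) B(1) no_edge
    by (rule perm_graph_rep_Un)
  moreover have "\<not> has_2413_or_3142 (A \<union> B) l pos"
  proof (rule has_2413_or_3142_Un)
    have notA: "x \<notin> A" if "x \<in> B" for x using assms(3) that by blast
    show "\<not> has_2413_or_3142 A l pos"
      using A(2) has_2413_or_3142_order_iso[OF bij_betw_id, of A l lA pos pA]
      unfolding l_def pos_def by simp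
    show "\<not> has_2413_or_3142 B l pos"
      using B(2) has_2413_or_3142_order_iso[OF bij_betw_id, of B l lB pos pB] notA
      unfolding l_def pos_def by simp
    have "lA x \<le> card A" "pA x \<le> card A" "1 \<le> lB y" "1 \<le> pB y" if "x \<in> A" "y \<in> B" for x y
      using A(1) B(1) that unfolding perm_graph_rep_def by (auto dest: bij_betwE)
    then show "l x < l y \<and> pos x < pos y" if "x \<in> A" "y \<in> B" for x y
      using that notA unfolding l_def pos_def by fastforce
  qed
  ultimately show ?thesis by (rule separable_perm_graph_if_rep)
qed

text \<open>Reversing the positions turns a permutation graph into its complement and swaps the
  patterns 2413 and 3142.\<close>
lemma separable_perm_graph_complement:
  assumes "separable_perm_graph V E"
  shows "separable_perm_graph V (\<lambda>x y. \<not> E x y)"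
proof -
  obtain l pos where rep: "perm_graph_rep V E l pos" and no_pattern: "\<not> has_2413_or_3142 V l pos"
    using assms by (rule separable_perm_graph_obtain_rep)
  define n where "n = card V"
  have pos: "bij_betw pos V {1..n}" using rep unfolding perm_graph_rep_def n_def by blast
  then have range: "pos x \<le> n" if "x \<in> V" for x using that by (auto dest: bij_betwE)
  have "bij_betw (\<lambda>i. Suc n - i) {1..n} {1..n}"
    by (rule bij_betw_byWitness[where f' = "\<lambda>i. Suc n - i"]) auto
  then have "bij_betw (\<lambda>x. Suc n - pos x) V {1..n}"
    using bij_betw_trans[OF pos] by (simp add: comp_def)
  moreover have "\<not> E u v \<longleftrightarrow> Suc n - pos u < Suc n - pos v"
    if "u \<in> V" "v \<in> V" "l v < l u" for u v
  proof -
    have "pos u \<noteq> pos v" using perm_graph_rep_inj_on[OF rep] that by (metis less_irrefl inj_onD)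
    then show ?thesis
      using rep that range[OF that(1)] range[OF that(2)] unfolding perm_graph_rep_def by auto
  qed
  ultimately have "perm_graph_rep V (\<lambda>x y. \<not> E x y) l (\<lambda>x. Suc n - pos x)"
    using rep unfolding perm_graph_rep_def n_def by blast
  moreover have "\<not> has_2413_or_3142 V l (\<lambda>x. Suc n - pos x)"
    using no_pattern has_2413_or_3142_reverse range by blast
  ultimately show ?thesis by (rule separable_perm_graph_if_rep)
qed

lemma separable_perm_graph_card_le_1:
  assumes "finite V" "card V \<le> 1"
  shows "separable_perm_graph V E"
proof -
  have "bij_betw (\<lambda>_. 1) V {1..card V}"
  proof (cases "card V = 0")
    case True
    then show ?thesis using assms(1) by (simp add: bij_betw_def)
  next
    case False
    then obtain x where "V = {x}"
      using assms(2) by (metis card_1_singletonE le_neq_implies_less less_one)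
    then show ?thesis by simp
  qed
  then have "perm_graph_rep V E (\<lambda>_. 1) (\<lambda>_. 1)" unfolding perm_graph_rep_def by simp
  moreover have "\<not> has_2413_or_3142 V (\<lambda>_. 1) (\<lambda>_. 1)"
    unfolding has_2413_or_3142_def is_2413_or_3142_def by simp
  ultimately show ?thesis by (rule separable_perm_graph_if_rep)
qed

lemma p4_free_imp_separable_perm_graph:
  assumes "finite V" "symp_on V E" "p4_free V E"
  shows "separable_perm_graph V E"
  using assms
proof (induction "card V" arbitrary: V E rule: less_induct)
  case less
  have split: "separable_perm_graph V F" if "disconnected V F" "symp_on V F" "p4_free V F" for F
  proof -
    obtain A where A: "A \<subseteq> V" "A \<noteq> {}" "A \<noteq> V" "\<forall>a\<in>A. \<forall>b\<in>V - A. \<not> F a b"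
      using \<open>disconnected V F\<close> unfolding disconnected_def by blast
    have "A \<subset> V" "V - A \<subset> V" using A(1-3) by blast+
    then have "card A < card V" "card (V - A) < card V"
      using psubset_card_mono[OF less.prems(1)] by blast+
    moreover have "finite A" "finite (V - A)" using A(1) less.prems(1) finite_subset by auto
    ultimately have "separable_perm_graph A F" "separable_perm_graph (V - A) F"
      using less.hyps A(1) symp_on_subset[OF that(2)] p4_free_subset[OF that(3)] by blast+
    then have "separable_perm_graph ((V - A) \<union> A) F"
      using A(4) \<open>finite A\<close> \<open>finite (V - A)\<close> by (intro separable_perm_graph_Un) auto
    moreover have "(V - A) \<union> A = V" using A(1) by blast
    ultimately show ?thesis by simp
  qed
  show ?case
  proof (cases "card V \<le> 1")
    case True
    then show ?thesis using less.prems(1) by (rule separable_perm_graph_card_le_1[rotated])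
  next
    case False
    then have "disconnected V E \<or> disconnected V (\<lambda>x y. \<not> E x y)"
      using less.prems by (intro p4_free_disconnected_or_co_disconnected) auto
    then show ?thesis
    proof
      assume "disconnected V (\<lambda>x y. \<not> E x y)"
      then have "separable_perm_graph V (\<lambda>x y. \<not> E x y)"
        using split symp_on_complement p4_free_complement less.prems(2,3) by blast
      from separable_perm_graph_complement[OF this] show ?thesis by simp
    qed (use split less.prems in blast)
  qed
qed

section \<open>Symbolic ultrametrics\<close>

lemma card_three_le_2_iff: "card {a, b, c} \<le> 2 \<longleftrightarrow> a = b \<or> a = c \<or> b = c"
  by (auto simp: card_insert_if)

lemma card_four_eq_4_iff: "card {a, b, c, d} = 4 \<longleftrightarrow> distinct [a, b, c, d]"
proof
  assume "card {a, b, c, d} = 4"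
  then have "card (set [a, b, c, d]) = length [a, b, c, d]" by simp
  then show "distinct [a, b, c, d]" by (rule card_distinct)
next
  assume "distinct [a, b, c, d]"
  from distinct_card[OF this] show "card {a, b, c, d} = 4" by simp
qed

lemma complete_edge_colored_symp_on_mono_edge:
  assumes "complete_edge_colored V c k" "W \<subseteq> V"
  shows "symp_on W (mono_edge c i)"
proof (rule symp_onI)
  fix x y assume "x \<in> W" "y \<in> W" "mono_edge c i x y"
  moreover have "c x y = c y x" if "x \<noteq> y"
    using assms \<open>x \<in> W\<close> \<open>y \<in> W\<close> that unfolding complete_edge_colored_def by blast
  ultimately show "mono_edge c i y x" unfolding mono_edge_def by auto
qed

lemma su_graph_rep_no_rainbow_triangle:
  assumes "is_su_graph_rep V c"
  shows "\<not> has_rainbow_triangle V c"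
proof
  assume "has_rainbow_triangle V c"
  then obtain x y z where V: "x \<in> V" "y \<in> V" "z \<in> V" "x \<noteq> y" "x \<noteq> z" "y \<noteq> z"
    and rainbow: "c x y \<noteq> c x z" "c x y \<noteq> c y z" "c x z \<noteq> c y z"
    unfolding has_rainbow_triangle_def rainbow_triangle_def by blast
  obtain d m where su: "symbolic_ultrametric V d m" and d: "\<forall>x\<in>V. \<forall>y\<in>V. x \<noteq> y \<longrightarrow> d x y = c x y"
    using assms unfolding is_su_graph_rep_def by blast
  have "card {d x y, d x z, d y z} \<le> 2" using su V(1-3) unfolding symbolic_ultrametric_def by blast
  moreover have "d x y = c x y" "d x z = c x z" "d y z = c y z" using d V by auto
  ultimately show False using rainbow unfolding card_three_le_2_iff by simp
qed

lemma su_graph_rep_p4_free: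
  assumes "is_su_graph_rep V c"
  shows "p4_free V (mono_edge c i)"
  unfolding p4_free_def
proof clarify
  fix x y u v
  assume V: "x \<in> V" "y \<in> V" "u \<in> V" "v \<in> V" and "distinct [x, y, u, v]"
    and "mono_edge c i x y" "mono_edge c i y u" "mono_edge c i u v"
    and "\<not> mono_edge c i x u" "\<not> mono_edge c i y v" "\<not> mono_edge c i x v"
  obtain d m where su: "symbolic_ultrametric V d m" and d: "\<forall>x\<in>V. \<forall>y\<in>V. x \<noteq> y \<longrightarrow> d x y = c x y"
    using assms unfolding is_su_graph_rep_def by blast
  have path: "d x y = i" "d y u = i" "d u v = i" "d x u \<noteq> i" "d y v \<noteq> i" "d x v \<noteq> i"
    using d V \<open>distinct [x, y, u, v]\<close> \<open>mono_edge c i x y\<close> \<open>mono_edge c i y u\<close> \<open>mono_edge c i u v\<close>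
      \<open>\<not> mono_edge c i x u\<close> \<open>\<not> mono_edge c i y v\<close> \<open>\<not> mono_edge c i x v\<close>
    unfolding mono_edge_def by auto
  have U2: "d a b = d a e \<or> d a b = d b e \<or> d a e = d b e" if "a \<in> V" "b \<in> V" "e \<in> V" for a b e
    using su that unfolding symbolic_ultrametric_def card_three_le_2_iff by blast
  have "d x u = d x v" using U2[of x u v] V path by auto
  moreover have "d x v = d y v" using U2[of x y v] V path by auto
  moreover have "d v y = d y v" using su V unfolding symbolic_ultrametric_def by blast
  ultimately have "d x y = d y u \<and> d y u = d u v \<and> d u v \<noteq> d v y \<and> d v y = d x v \<and> d x v = d x u"
    using path by simp
  then show False
    using su V \<open>distinct [x, y, u, v]\<close>
    unfolding symbolic_ultrametric_def card_four_eq_4_iff by blast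
qed

lemma card_le_2_if_no_rainbow_triangle:
  assumes "\<not> has_rainbow_triangle V c"
    and agree: "\<And>x y. x \<in> V \<Longrightarrow> y \<in> V \<Longrightarrow> x \<noteq> y \<Longrightarrow> d x y = c x y"
    and sym: "\<And>x y. x \<in> V \<Longrightarrow> y \<in> V \<Longrightarrow> d x y = d y x"
    and "x \<in> V" "y \<in> V" "z \<in> V"
  shows "card {d x y, d x z, d y z} \<le> 2"
  unfolding card_three_le_2_iff
proof (cases "x = y \<or> x = z \<or> y = z")
  case True
  then show "d x y = d x z \<or> d x y = d y z \<or> d x z = d y z" using sym[OF assms(4,5)] by auto
next
  case False
  have "\<not> rainbow_triangle V c x y z" using assms(1) unfolding has_rainbow_triangle_def by blast
  then have "c x y = c x z \<or> c x y = c y z \<or> c x z = c y z"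
    using False assms(4-6) unfolding rainbow_triangle_def by blast
  moreover have "d x y = c x y" "d x z = c x z" "d y z = c y z"
    using agree[OF assms(4,5)] agree[OF assms(4,6)] agree[OF assms(5,6)] False by simp_all
  ultimately show "d x y = d x z \<or> d x y = d y z \<or> d x z = d y z" by simp
qed

lemma alternating_path_if_p4_free:
  assumes col: "complete_edge_colored V c k" and p4: "\<forall>i\<in>{1..k}. p4_free V (mono_edge c i)"
    and agree: "\<And>x y. x \<in> V \<Longrightarrow> y \<in> V \<Longrightarrow> x \<noteq> y \<Longrightarrow> d x y = c x y"
    and V: "x \<in> V" "y \<in> V" "u \<in> V" "v \<in> V" and "distinct [x, y, u, v]"
    and "d x y = d y u" "d y u = d u v" "d v y = d x v" "d x v = d x u"
  shows "d u v = d v y"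
proof (rule ccontr)
  assume "d u v \<noteq> d v y"
  have c: "\<And>a b. a \<in> V \<Longrightarrow> b \<in> V \<Longrightarrow> a \<noteq> b \<Longrightarrow> c a b = c b a \<and> c a b \<in> {1..k}"
    using col unfolding complete_edge_colored_def by blast
  have "c x y \<in> {1..k}" using c V \<open>distinct [x, y, u, v]\<close> by simp
  moreover have "d x y = c x y" "d y u = c y u" "d u v = c u v" "d v y = c y v" "d x v = c x v"
    "d x u = c x u"
    using agree c V \<open>distinct [x, y, u, v]\<close> by auto
  then have "mono_edge c (c x y) x y" "mono_edge c (c x y) y u" "mono_edge c (c x y) u v"
    "\<not> mono_edge c (c x y) x u" "\<not> mono_edge c (c x y) y v" "\<not> mono_edge c (c x y) x v"
    using assms(9-12) \<open>d u v \<noteq> d v y\<close> \<open>distinct [x, y, u, v]\<close> unfolding mono_edge_def by auto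
  ultimately show False using p4_freeD[OF bspec[OF p4] V \<open>distinct [x, y, u, v]\<close>] by blast
qed

lemma su_graph_rep_if_p4_free:
  assumes col: "complete_edge_colored V c k" and "V \<noteq> {}"
    and no_rainbow: "\<not> has_rainbow_triangle V c"
    and p4: "\<forall>i\<in>{1..k}. p4_free V (mono_edge c i)"
  shows "is_su_graph_rep V c"
proof -
  txt \<open>A symbolic ultrametric also colours the diagonal, with a colour in 1..m; the edge
    colouring says nothing there, so colour 1 is used.\<close>
  define d where "d x y = (if x = y then 1 else c x y)" for x y
  have c: "\<forall>x\<in>V. \<forall>y\<in>V. x \<noteq> y \<longrightarrow> c x y = c y x \<and> c x y \<in> {1..k}"
    and onto: "\<forall>i\<in>{1..k}. \<exists>x\<in>V. \<exists>y\<in>V. x \<noteq> y \<and> c x y = i" and "finite V"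
    using col unfolding complete_edge_colored_def by auto
  have agree: "d x y = c x y" if "x \<noteq> y" for x y using that unfolding d_def by simp
  have sym: "d x y = d y x" if "x \<in> V" "y \<in> V" for x y using c that unfolding d_def by auto
  have range: "\<forall>x\<in>V. \<forall>y\<in>V. d x y \<in> {1..max k 1}"
    using c unfolding d_def by (force simp: le_max_iff_disj)
  have "\<forall>i\<in>{1..max k 1}. \<exists>x\<in>V. \<exists>y\<in>V. d x y = i"
  proof
    fix i assume "i \<in> {1..max k 1}"
    then have "i \<in> {1..k} \<or> i = 1" by auto
    then show "\<exists>x\<in>V. \<exists>y\<in>V. d x y = i"
      using onto \<open>V \<noteq> {}\<close> unfolding d_def by (metis all_not_in_conv)
  qed
  moreover have "\<forall>x\<in>V. \<forall>y\<in>V. \<forall>z\<in>V. card {d x y, d x z, d y z} \<le> 2"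
    using card_le_2_if_no_rainbow_triangle[OF no_rainbow agree sym] by blast
  moreover have "\<not> (\<exists>x\<in>V. \<exists>y\<in>V. \<exists>u\<in>V. \<exists>v\<in>V. card {x, y, u, v} = 4 \<and>
      d x y = d y u \<and> d y u = d u v \<and> d u v \<noteq> d v y \<and> d v y = d x v \<and> d x v = d x u)"
    using alternating_path_if_p4_free[OF col p4 agree] unfolding card_four_eq_4_iff by blast
  ultimately have "symbolic_ultrametric V d (max k 1)"
    unfolding symbolic_ultrametric_def using \<open>finite V\<close> \<open>V \<noteq> {}\<close> range sym by blast
  then show ?thesis unfolding is_su_graph_rep_def using agree by blast
qed

theorem corollary6p6:
  fixes V :: "'a set" and c :: "'a \<Rightarrow> 'a \<Rightarrow> nat" and k :: nat
  assumes "complete_edge_colored V c k" and "V \<noteq> {}"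
  shows "(is_su_graph_rep V c \<longleftrightarrow>
            (\<not> has_rainbow_triangle V c \<and>
             (\<forall>i\<in>{1..k}. separable_perm_graph V (mono_edge c i)))) \<and>
         (is_su_graph_rep V c \<longrightarrow>
            (\<forall>W. W \<subseteq> V \<and> W \<noteq> {} \<longrightarrow>
               (\<forall>i\<in>colors_on W c. separable_perm_graph W (mono_edge c i))))"
proof -
  have "finite V" using assms(1) unfolding complete_edge_colored_def by blast
  have sep: "separable_perm_graph W (mono_edge c i)" if "is_su_graph_rep V c" "W \<subseteq> V" for W i
    using p4_free_imp_separable_perm_graph[OF finite_subset[OF \<open>W \<subseteq> V\<close> \<open>finite V\<close>]
        complete_edge_colored_symp_on_mono_edge[OF assms(1) \<open>W \<subseteq> V\<close>]
        p4_free_subset[OF su_graph_rep_p4_free[OF \<open>is_su_graph_rep V c\<close>] \<open>W \<subseteq> V\<close>]] .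
  have p4: "p4_free V (mono_edge c i)" if "separable_perm_graph V (mono_edge c i)" for i
    using complete_edge_colored_symp_on_mono_edge[OF assms(1) order_refl] that
    by (rule separable_perm_graph_imp_p4_free)
  have "is_su_graph_rep V c \<longleftrightarrow>
      \<not> has_rainbow_triangle V c \<and> (\<forall>i\<in>{1..k}. separable_perm_graph V (mono_edge c i))"
  proof
    assume "is_su_graph_rep V c"
    then show "\<not> has_rainbow_triangle V c \<and> (\<forall>i\<in>{1..k}. separable_perm_graph V (mono_edge c i))"
      using su_graph_rep_no_rainbow_triangle sep[OF _ order_refl] by simp
  next
    assume "\<not> has_rainbow_triangle V c \<and> (\<forall>i\<in>{1..k}. separable_perm_graph V (mono_edge c i))"
    then have "\<not> has_rainbow_triangle V c" "\<forall>i\<in>{1..k}. p4_free V (mono_edge c i)"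
      using p4 by simp_all
    then show "is_su_graph_rep V c" by (rule su_graph_rep_if_p4_free[OF assms])
  qed
  moreover have "\<forall>W. W \<subseteq> V \<and> W \<noteq> {} \<longrightarrow> (\<forall>i\<in>colors_on W c. separable_perm_graph W (mono_edge c i))"
    if "is_su_graph_rep V c"
    using sep[OF that] by simp
  ultimately show ?thesis by simp
qed

end
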